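(* Let $k$ be a positive integer and $\varrho\ge0$, and define the multiple Dirichlet series \[F_{k,\varrho}(s_1,\dots,s_{2k})=\sum_{\substack{n_1\cdots n_k=n_{k+1}\cdots n_{2k}\\ n_j\ge1}}\frac{\varrho^{\Omega(n_1)}\cdots\varrho^{\Omega(n_{2k})}}{n_1^{1/2+s_1}\cdots n_{2k}^{1/2+s_{2k}}}.\] Fix $\delta>0$. Uniformly for $0\le\varrho\le\sqrt{2-\delta}$ and $0<\sigma\le1/\log k$ it holds that \[|F_{k,\varrho}(\underline{s})|\le\exp\Big(-k^2\varrho^2\big(\log 2\sigma+\log\log(k^2\varrho^2)+O_\delta(1)\big)\Big)\] whenever $s_\ell=\sigma+it_\ell$ with $t_\ell\in\mathbb{R}$ for $1\le\ell\le 2k$.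
   Context: $\Omega(n)$ is the number of prime factors of $n$ counted with multiplicity. The paper assumes throughout that $k$ (and $k\varrho$) is large enough for the iterated logarithms to be positive. *)

theory Defs
  imports "HOL-Analysis.Analysis" "HOL-Computational_Algebra.Primes"
begin

definition bigOmega :: "nat \<Rightarrow> nat" where
  "bigOmega n = size (prime_factorization n)"

text \<open>Index set of the multiple Dirichlet series: tuples (n_0,...,n_{2k-1}) of positive
  integers with n_0 ... n_{k-1} = n_k ... n_{2k-1}; encoded as functions nat => nat that
  vanish outside {0..<2k}.\<close>
definition tuples :: "nat \<Rightarrow> (nat \<Rightarrow> nat) set" where
  "tuples k = {n. (\<forall>j<2*k. 1 \<le> n j) \<and> (\<forall>j\<ge>2*k. n j = 0) \<and>
                  (\<Prod>j<k. n j) = (\<Prod>j\<in>{k..<2*k}. n j)}"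

definition F :: "nat \<Rightarrow> real \<Rightarrow> (nat \<Rightarrow> complex) \<Rightarrow> complex" where
  "F k \<rho> s = (\<Sum>\<^sub>\<infinity>n\<in>tuples k.
      \<Prod>j<2*k. complex_of_real (\<rho> ^ bigOmega (n j)) / (of_nat (n j)) powr (1/2 + s j))"

end

theory Submission
  imports Defs
begin

text \<open>
  Replacing each \<open>s\<^sub>j\<close> by its real part \<open>\<sigma>\<close> bounds \<open>|F|\<close> by a series with nonnegative terms,
  so it suffices to bound its finite partial sums. Such a partial sum is at most an Euler product
  whose factor at \<open>p\<close> sums \<open>x^(|e| + |e'|)\<close>, with \<open>x = \<rho> p^(-1/2-\<sigma>)\<close>, over the pairs of
  exponent vectors of \<open>p\<close> in the two halves of a tuple that have equal totals. Let \<open>K = k\<^sup>2\<rho>\<^sup>2\<close>.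
  For \<open>p \<le> 4K\<close> the factor is at most \<open>(1 - x)^(-2k)\<close>; since \<open>\<rho>\<^sup>2 \<le> 2 - \<delta>\<close> keeps \<open>x\<close> away from \<open>1\<close>,
  these primes contribute \<open>exp O(k \<rho> \<Sum>\<^sub>n\<^sub>\<le>\<^sub>4\<^sub>K n^(-1/2)) = exp O(K)\<close>. For \<open>p > 4K\<close> we have
  \<open>kx \<le> 1/2\<close>, and only the zero pair contributes to first order: the factor is at most
  \<open>exp (K p^(-1-2\<sigma>) + O((K/p)^(3/2)))\<close>. Comparing Euler products, \<open>\<Sum>\<^sub>p\<^sub>>\<^sub>4\<^sub>K p^(-1-2\<sigma>)\<close> is at most
  the logarithm of \<open>\<zeta>(1 + 2\<sigma>) / \<Sum>\<^sub>n\<^sub>\<le>\<^sub>4\<^sub>K n^(-1-2\<sigma>)\<close>, and as \<open>\<sigma> log K = O(1)\<close> the denominator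
  is of order \<open>log K\<close>; this gives \<open>-log 2\<sigma> - log log K + O(1)\<close>.
\<close>

lemma sum_inverse_sqrt_le: "(\<Sum>n=1..M. 1 / sqrt (real n)) \<le> 2 * sqrt (real M)"
proof (induction M)
  case 0
  then show ?case by simp
next
  case (Suc M)
  have "1 = (sqrt (real (Suc M)) - sqrt (real M)) * (sqrt (real (Suc M)) + sqrt (real M))"
    by (simp add: algebra_simps)
  also have "\<dots> \<le> (sqrt (real (Suc M)) - sqrt (real M)) * (2 * sqrt (real (Suc M)))"
    by (intro mult_left_mono) auto
  finally have "1 \<le> (sqrt (real (Suc M)) - sqrt (real M)) * (2 * sqrt (real (Suc M)))" .
  then have "1 / sqrt (real (Suc M)) \<le> 2 * sqrt (real (Suc M)) - 2 * sqrt (real M)"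
    by (simp add: field_simps)
  then show ?case using Suc by simp
qed

lemma inverse_pow_three_halves_le_diff:
  assumes "1 \<le> L"
  shows "1 / (real (Suc L) * sqrt (real (Suc L))) \<le> 2 / sqrt (real L) - 2 / sqrt (real (Suc L))"
proof -
  define a where "a = sqrt (real L)"
  define b where "b = sqrt (real (Suc L))"
  have a0: "0 < a" and ab: "a \<le> b" using assms by (simp_all add: a_def b_def)
  have "(b - a) * (b + a) = 1" using a0 by (simp add: a_def b_def algebra_simps)
  then have "b - a = 1 / (b + a)" using a0 ab by (simp add: field_simps)
  have "2 / a - 2 / b = 2 * (b - a) / (a * b)" using a0 ab by (simp add: field_simps)
  also have "\<dots> = 2 / ((b + a) * (a * b))" by (simp add: \<open>b - a = 1 / (b + a)\<close>)
  also have "\<dots> \<ge> 2 / ((2 * b) * (b * b))"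
    using a0 ab by (intro frac_le mult_mono mult_pos_pos) (auto intro!: mult_right_mono)
  finally have "1 / (b * b * b) \<le> 2 / a - 2 / b" by (simp add: mult.assoc)
  moreover have "real (Suc L) * sqrt (real (Suc L)) = b * b * b"
    unfolding b_def by simp
  ultimately show ?thesis by (simp add: a_def b_def)
qed

lemma sum_inverse_pow_three_halves_le:
  assumes "1 \<le> M" "M \<le> L"
  shows "(\<Sum>n=Suc M..L. 1 / (real n * sqrt (real n))) \<le> 2 / sqrt (real M) - 2 / sqrt (real L)"
  using assms(2)
proof (induction L)
  case 0
  then show ?case using assms by simp
next
  case (Suc L)
  show ?case
  proof (cases "M = Suc L")
    case False
    then have "M \<le> L" using Suc by simp
    then show ?thesis
      using Suc.IH inverse_pow_three_halves_le_diff[of L] assms(1) by simp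
  qed simp
qed

lemma sum_inverse_pow_three_halves_greaterThan_le:
  assumes "1 \<le> M" "finite Q" "Q \<subseteq> {M<..}"
  shows "(\<Sum>n\<in>Q. 1 / (real n * sqrt (real n))) \<le> 2 / sqrt (real M)"
proof -
  define L where "L = max M (Max (insert 0 Q))"
  have "Q \<subseteq> {Suc M..L}"
  proof
    fix n assume "n \<in> Q"
    then have "M < n" "n \<le> Max (insert 0 Q)" using assms(2,3) by (auto intro: Max_ge)
    then show "n \<in> {Suc M..L}" by (auto simp: L_def)
  qed
  then have "(\<Sum>n\<in>Q. 1 / (real n * sqrt (real n))) \<le> (\<Sum>n=Suc M..L. 1 / (real n * sqrt (real n)))"
    by (intro sum_mono2) auto
  also have "\<dots> \<le> 2 / sqrt (real M) - 2 / sqrt (real L)"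
    using assms(1) by (intro sum_inverse_pow_three_halves_le) (auto simp: L_def)
  also have "\<dots> \<le> 2 / sqrt (real M)" by simp
  finally show ?thesis .
qed

lemma powr_minus_le_telescoping:
  fixes s :: real
  assumes "1 < s" "1 \<le> m"
  shows "real (Suc m) powr (-s) \<le> (real m powr (1 - s) - real (Suc m) powr (1 - s)) / (s - 1)"
proof -
  obtain z where z: "real m < z" "z < real (Suc m)"
    "real (Suc m) powr (1 - s) - real m powr (1 - s) = (1 - s) * z powr (-s)"
    using MVT2[of "real m" "real (Suc m)" "\<lambda>x. x powr (1 - s)" "\<lambda>x. (1 - s) * x powr (1 - s - 1)"]
      assms by (force intro!: derivative_eq_intros)
  have "real (Suc m) powr (-s) \<le> z powr (-s)"
    using z assms by (intro powr_mono2') auto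
  also have "\<dots> = (real m powr (1 - s) - real (Suc m) powr (1 - s)) / (s - 1)"
    using z(3) assms by (simp add: field_simps)
  finally show ?thesis .
qed

lemma sum_powr_le_zeta_bound:
  fixes s :: real
  assumes "1 < s"
  shows "(\<Sum>n=1..M. real n powr (-s)) \<le> 1 + 1 / (s - 1)"
proof -
  have partial: "(\<Sum>n=1..M. real n powr (-s)) \<le> 1 + (1 - real M powr (1 - s)) / (s - 1)"
    if "1 \<le> M" for M
    using that
  proof (induction M rule: dec_induct)
    case (step m)
    have "(\<Sum>n=1..Suc m. real n powr (-s)) = (\<Sum>n=1..m. real n powr (-s)) + real (Suc m) powr (-s)"
      by simp
    also have "\<dots> \<le> 1 + (1 - real m powr (1 - s)) / (s - 1)
        + (real m powr (1 - s) - real (Suc m) powr (1 - s)) / (s - 1)"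
      using step.IH powr_minus_le_telescoping[OF assms step.hyps(1)] by linarith
    also have "\<dots> = 1 + (1 - real (Suc m) powr (1 - s)) / (s - 1)"
      by (simp add: diff_divide_distrib)
    finally show ?case .
  qed simp
  have "(1 - real M powr (1 - s)) / (s - 1) \<le> 1 / (s - 1)"
    using assms by (intro divide_right_mono) auto
  then show ?thesis using partial[of M] assms by (cases "M = 0") auto
qed

lemma sum_power_atMost_le:
  fixes x :: real
  assumes "0 \<le> x" "x < 1"
  shows "(\<Sum>b=0..N. x ^ b) \<le> 1 / (1 - x)"
proof -
  have "(\<Sum>b=0..N. x ^ b) = (\<Sum>b<Suc N. x ^ b)"
    by (simp add: atLeast0AtMost lessThan_Suc_atMost)
  also have "\<dots> = (1 - x ^ Suc N) / (1 - x)"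
    using assms by (subst sum_gp_strict) auto
  also have "\<dots> \<le> 1 / (1 - x)" using assms by (intro divide_right_mono) auto
  finally show ?thesis .
qed

lemma one_le_sum_power_atMost:
  fixes x :: real
  assumes "0 \<le> x"
  shows "1 \<le> (\<Sum>b=0..N. x ^ b)"
proof -
  have "(\<Sum>b=0..N. x ^ b) = 1 + (\<Sum>b\<in>{0..N} - {0}. x ^ b)"
    by (subst sum.remove[of _ 0]) auto
  moreover have "0 \<le> (\<Sum>b\<in>{0..N} - {0}. x ^ b)" using assms by (intro sum_nonneg) auto
  ultimately show ?thesis by simp
qed

lemma square_div_one_minus_le:
  fixes t :: real
  assumes "0 \<le> t" "t \<le> 1/2"
  shows "(t / (1 - t))\<^sup>2 \<le> t\<^sup>2 + 6 * t ^ 3"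
proof -
  have "(1 + 6 * t) * (1 - t)\<^sup>2 = 1 + t * ((1 - 2 * t) * (4 - 3 * t))"
    by (simp add: power2_eq_square algebra_simps)
  moreover have "0 \<le> t * ((1 - 2 * t) * (4 - 3 * t))"
    using assms by (intro mult_nonneg_nonneg) auto
  ultimately have "t\<^sup>2 * 1 \<le> t\<^sup>2 * ((1 + 6 * t) * (1 - t)\<^sup>2)"
    by (intro mult_left_mono) auto
  then have "t\<^sup>2 / (1 - t)\<^sup>2 \<le> t\<^sup>2 * (1 + 6 * t)"
    using assms by (simp add: divide_le_eq mult.assoc)
  then show ?thesis by (simp add: power_divide algebra_simps power3_eq_cube power2_eq_square)
qed

lemma le_ln_one_add_add_square:
  fixes u :: real
  assumes "0 \<le> u" "u \<le> 1"
  shows "u \<le> ln (1 + u + u\<^sup>2)"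
proof -
  have "exp u \<le> 1 + u + u\<^sup>2" by (rule exp_bound[OF assms])
  then have "ln (exp u) \<le> ln (1 + u + u\<^sup>2)"
    using assms by (subst ln_le_cancel_iff) (auto intro: add_pos_nonneg)
  then show ?thesis by simp
qed

lemma ln_two_ge_half: "1/2 \<le> ln (2::real)"
proof -
  have "exp (1/2::real) \<le> 1 + 1/2 + (1/2)\<^sup>2" by (rule exp_bound) auto
  also have "\<dots> \<le> exp (ln 2)" by (simp add: power2_eq_square)
  finally show ?thesis by (simp only: exp_le_cancel_iff)
qed

lemma norm_infsum_le_finite_sums:
  fixes f :: "'a \<Rightarrow> 'b::banach"
  assumes "\<And>F. finite F \<Longrightarrow> F \<subseteq> A \<Longrightarrow> (\<Sum>x\<in>F. norm (f x)) \<le> B"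
  shows "norm (infsum f A) \<le> B"
proof -
  have "(\<lambda>x. norm (f x)) summable_on A"
    using assms by (intro nonneg_bdd_above_summable_on bdd_aboveI) auto
  then have "norm (infsum f A) \<le> infsum (\<lambda>x. norm (f x)) A"
    by (rule norm_infsum_bound)
  also have "\<dots> \<le> B"
    using \<open>(\<lambda>x. norm (f x)) summable_on A\<close> assms by (rule infsum_le_finite_sums)
  finally show ?thesis .
qed

section \<open>Finite Euler products\<close>

lemma prime_factors_subset_primes_le:
  fixes n N :: nat
  assumes "0 < n" "n \<le> N"
  shows "prime_factors n \<subseteq> {p. prime p \<and> p \<le> N}"
  using assms by (auto simp: in_prime_factors_iff dest!: dvd_imp_le)

lemma bigOmega_eq_sum_multiplicity:
  fixes n :: nat
  assumes "0 < n" "finite Q" "prime_factors n \<subseteq> Q" "\<And>p. p \<in> Q \<Longrightarrow> prime p"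
  shows "bigOmega n = (\<Sum>p\<in>Q. multiplicity p n)"
proof -
  have "bigOmega n = (\<Sum>p\<in>prime_factors n. multiplicity p n)"
    unfolding bigOmega_def
    by (auto simp: size_multiset_overloaded_eq count_prime_factorization_prime
        in_prime_factors_imp_prime intro!: sum.cong)
  also have "\<dots> = (\<Sum>p\<in>Q. multiplicity p n)"
    using assms by (intro sum.mono_neutral_left) (auto simp: prime_factors_multiplicity)
  finally show ?thesis .
qed

lemma prod_prime_power_multiplicity_eq:
  fixes n :: nat
  assumes "0 < n" "finite Q" "prime_factors n \<subseteq> Q" "\<And>p. p \<in> Q \<Longrightarrow> prime p"
  shows "(\<Prod>p\<in>Q. p ^ multiplicity p n) = n"
proof -
  have "(\<Prod>p\<in>Q. p ^ multiplicity p n) = (\<Prod>p\<in>prime_factors n. p ^ multiplicity p n)"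
    using assms by (intro prod.mono_neutral_right) (auto simp: prime_factors_multiplicity)
  also have "\<dots> = n" using assms(1) by (simp add: prod_prime_factors)
  finally show ?thesis .
qed

lemma multiplicity_le_self:
  fixes n p :: nat
  assumes "0 < n" "prime p"
  shows "multiplicity p n \<le> n"
proof -
  let ?m = "multiplicity p n"
  have "?m < 2 ^ ?m" by (rule less_exp)
  also have "(2::nat) ^ ?m \<le> p ^ ?m" using prime_ge_2_nat[OF assms(2)] by (intro power_mono) auto
  also have "p ^ ?m \<le> n" using assms(1) by (intro dvd_imp_le multiplicity_dvd) auto
  finally show ?thesis by simp
qed

lemma prod_power_powr_of_nat:
  assumes "finite Q" "\<And>p. p \<in> Q \<Longrightarrow> 0 < p"
  shows "(\<Prod>p\<in>Q. (real p powr a) ^ e p) = real (\<Prod>p\<in>Q. p ^ e p) powr a"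
proof -
  have "(\<Prod>p\<in>Q. (real p powr a) ^ e p) = (\<Prod>p\<in>Q. real (p ^ e p) powr a)"
    using assms by (intro prod.cong) (auto simp: powr_powr powr_realpow[symmetric] mult.commute)
  also have "\<dots> = real (\<Prod>p\<in>Q. p ^ e p) powr a" by (simp add: prod_powr_distrib)
  finally show ?thesis .
qed

lemma inj_on_prod_prime_powers:
  fixes Q :: "nat set"
  assumes "finite Q" "\<And>p. p \<in> Q \<Longrightarrow> prime p"
  shows "inj_on (\<lambda>e. \<Prod>p\<in>Q. p ^ e p) (PiE Q S)"
proof (rule inj_onI)
  fix e e' assume e: "e \<in> PiE Q S" and e': "e' \<in> PiE Q S"
    and eq: "(\<Prod>p\<in>Q. p ^ e p) = (\<Prod>p\<in>Q. p ^ e' p)"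
  show "e = e'"
  proof (rule PiE_ext[OF e e'])
    fix p assume "p \<in> Q"
    then show "e p = e' p"
      using eq multiplicity_prod_prime_powers[OF assms, of p e]
        multiplicity_prod_prime_powers[OF assms, of p e'] assms(2) by simp
  qed
qed

lemma prod_sum_prime_powers_eq:
  fixes Q :: "nat set" and A :: "nat \<Rightarrow> nat"
  assumes "finite Q" "\<And>p. p \<in> Q \<Longrightarrow> prime p"
  shows "(\<Prod>p\<in>Q. \<Sum>a=0..A p. (real p powr (-s)) ^ a)
    = (\<Sum>m \<in> (\<lambda>e. \<Prod>p\<in>Q. p ^ e p) ` PiE Q (\<lambda>p. {0..A p}). real m powr (-s))"
proof -
  let ?E = "PiE Q (\<lambda>p. {0..A p})"
  have pos: "\<And>p. p \<in> Q \<Longrightarrow> 0 < p" using assms(2) prime_gt_0_nat by blast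
  have "(\<Prod>p\<in>Q. \<Sum>a=0..A p. (real p powr (-s)) ^ a) = (\<Sum>e\<in>?E. \<Prod>p\<in>Q. (real p powr (-s)) ^ e p)"
    using assms by (subst prod_sum_PiE) auto
  also have "\<dots> = (\<Sum>e\<in>?E. real (\<Prod>p\<in>Q. p ^ e p) powr (-s))"
    using assms pos by (intro sum.cong refl prod_power_powr_of_nat) auto
  also have "\<dots> = (\<Sum>m \<in> (\<lambda>e. \<Prod>p\<in>Q. p ^ e p) ` ?E. real m powr (-s))"
    using inj_on_prod_prime_powers[OF assms] by (simp add: sum.reindex)
  finally show ?thesis .
qed

lemma prod_sum_prime_powers_le:
  fixes Q :: "nat set" and A :: "nat \<Rightarrow> nat" and s :: real
  assumes "finite Q" "\<And>p. p \<in> Q \<Longrightarrow> prime p" "1 < s"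
  shows "(\<Prod>p\<in>Q. \<Sum>a=0..A p. (real p powr (-s)) ^ a) \<le> 1 + 1 / (s - 1)"
proof -
  define I where "I = (\<lambda>e. \<Prod>p\<in>Q. p ^ e p) ` PiE Q (\<lambda>p. {0..A p})"
  have "finite I" using assms unfolding I_def by (auto intro!: finite_PiE)
  moreover have "0 \<notin> Q" using assms(2) not_prime_0 by blast
  then have "0 \<notin> I" using assms(1) unfolding I_def by auto
  ultimately have "I \<subseteq> {1..\<Sum>I}"
    by (auto simp: Suc_le_eq intro: gr0I member_le_sum)
  then have "(\<Sum>m\<in>I. real m powr (-s)) \<le> (\<Sum>m=1..\<Sum>I. real m powr (-s))"
    by (intro sum_mono2) auto
  also have "\<dots> \<le> 1 + 1 / (s - 1)" using assms(3) by (rule sum_powr_le_zeta_bound)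
  finally show ?thesis using prod_sum_prime_powers_eq[OF assms(1,2)] by (simp add: I_def)
qed

lemma sum_powr_le_prod_sum_prime_powers:
  fixes y A :: nat
  assumes "y \<le> A"
  shows "(\<Sum>n=1..y. real n powr (-s)) \<le> (\<Prod>p | prime p \<and> p \<le> y. \<Sum>a=0..A. (real p powr (-s)) ^ a)"
proof -
  define Q where "Q = {p::nat. prime p \<and> p \<le> y}"
  have Q: "finite Q" "\<And>p. p \<in> Q \<Longrightarrow> prime p" unfolding Q_def by auto
  define I where "I = (\<lambda>e. \<Prod>p\<in>Q. p ^ e p) ` PiE Q (\<lambda>_. {0..A})"
  have "{1..y} \<subseteq> I"
  proof
    fix n assume n: "n \<in> {1..y}"
    then have "prime_factors n \<subseteq> Q" unfolding Q_def by (intro prime_factors_subset_primes_le) auto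
    then have "n = (\<Prod>p\<in>Q. p ^ (\<lambda>p\<in>Q. multiplicity p n) p)"
      using n Q prod_prime_power_multiplicity_eq[of n Q] by (auto intro!: prod.cong)
    moreover have "(\<lambda>p\<in>Q. multiplicity p n) \<in> PiE Q (\<lambda>_. {0..A})"
    proof (rule restrict_PiE_iff[THEN iffD2], intro ballI)
      fix p assume "p \<in> Q"
      then have "multiplicity p n \<le> n" using n Q(2) by (intro multiplicity_le_self) auto
      then show "multiplicity p n \<in> {0..A}" using n assms by simp
    qed
    ultimately show "n \<in> I" unfolding I_def by blast
  qed
  then have "(\<Sum>n=1..y. real n powr (-s)) \<le> (\<Sum>m\<in>I. real m powr (-s))"
    using Q unfolding I_def by (intro sum_mono2) (auto intro!: finite_PiE)
  then show ?thesis using prod_sum_prime_powers_eq[OF Q] by (simp add: I_def Q_def)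
qed

lemma power_bigOmega_mult_powr_eq_prod:
  fixes m N :: nat and \<rho> c :: real
  assumes "1 \<le> m" "m \<le> N"
  shows "\<rho> ^ bigOmega m * real m powr (-c)
    = (\<Prod>p | prime p \<and> p \<le> N. (\<rho> * real p powr (-c)) ^ multiplicity p m)"
proof -
  define P where "P = {p::nat. prime p \<and> p \<le> N}"
  have P: "finite P" "\<And>p. p \<in> P \<Longrightarrow> prime p" "\<And>p. p \<in> P \<Longrightarrow> 0 < p"
    unfolding P_def by (auto simp: prime_gt_0_nat)
  have m: "0 < m" "prime_factors m \<subseteq> P"
    using assms prime_factors_subset_primes_le[of m N] by (auto simp: P_def)
  have "\<rho> ^ bigOmega m = (\<Prod>p\<in>P. \<rho> ^ multiplicity p m)"
    using bigOmega_eq_sum_multiplicity[OF m(1) P(1) m(2) P(2)] by (simp add: power_sum)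
  moreover have "real m powr (-c) = (\<Prod>p\<in>P. (real p powr (-c)) ^ multiplicity p m)"
    using prod_power_powr_of_nat[OF P(1,3), of "-c" "\<lambda>p. multiplicity p m"]
      prod_prime_power_multiplicity_eq[OF m(1) P(1) m(2) P(2)] by simp
  ultimately show ?thesis by (simp add: P_def prod.distrib power_mult_distrib)
qed

section \<open>Local factors\<close>

text \<open>The Euler factor at a prime \<open>p\<close> of the series with entries at most \<open>N\<close>, evaluated at
  \<open>x = \<rho> p^(-1/2-\<sigma>)\<close>: \<open>e\<close> and \<open>e'\<close> are the exponents of \<open>p\<close> in \<open>n\<^sub>1, ..., n\<^sub>k\<close> and in
  \<open>n\<^sub>k\<^sub>+\<^sub>1, ..., n\<^sub>2\<^sub>k\<close>, whose products agree.\<close>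

definition balanced_exponent_pairs :: "nat \<Rightarrow> nat \<Rightarrow> ((nat \<Rightarrow> nat) \<times> (nat \<Rightarrow> nat)) set" where
  "balanced_exponent_pairs k N =
    {(e, e') \<in> PiE {..<k} (\<lambda>_. {0..N}) \<times> PiE {..<k} (\<lambda>_. {0..N}). sum e {..<k} = sum e' {..<k}}"

definition local_factor :: "nat \<Rightarrow> nat \<Rightarrow> real \<Rightarrow> real" where
  "local_factor k N x = (\<Sum>(e, e') \<in> balanced_exponent_pairs k N. x ^ sum e {..<k} * x ^ sum e' {..<k})"

lemma finite_balanced_exponent_pairs: "finite (balanced_exponent_pairs k N)"
  unfolding balanced_exponent_pairs_def
  by (rule finite_subset[of _ "PiE {..<k} (\<lambda>_. {0..N}) \<times> PiE {..<k} (\<lambda>_. {0..N})"])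
    (auto intro!: finite_PiE)

lemma local_factor_nonneg: "0 \<le> x \<Longrightarrow> 0 \<le> local_factor k N x"
  unfolding local_factor_def by (intro sum_nonneg) auto

lemma sum_power_sum_PiE:
  fixes x :: real
  shows "(\<Sum>e\<in>PiE {..<k} (\<lambda>_. {0..N}). x ^ sum e {..<k}) = (\<Sum>b=0..N. x ^ b) ^ k"
proof -
  have "(\<Sum>e\<in>PiE {..<k} (\<lambda>_. {0..N}). x ^ sum e {..<k})
      = (\<Sum>e\<in>PiE {..<k} (\<lambda>_. {0..N}). \<Prod>j<k. x ^ e j)"
    by (simp add: power_sum)
  also have "\<dots> = (\<Prod>j<k. \<Sum>b=0..N. x ^ b)"
    by (subst prod_sum_PiE) auto
  finally show ?thesis by simp
qed

lemma local_factor_le_square: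
  fixes x :: real
  assumes "0 \<le> x"
  shows "local_factor k N x \<le> ((\<Sum>b=0..N. x ^ b) ^ k)\<^sup>2"
proof -
  let ?D = "PiE {..<k} (\<lambda>_. {0..N})"
  have "local_factor k N x \<le> (\<Sum>(e, e') \<in> ?D \<times> ?D. x ^ sum e {..<k} * x ^ sum e' {..<k})"
    unfolding local_factor_def
  proof (rule sum_mono2)
    show "finite (?D \<times> ?D)" by (simp add: finite_PiE)
    show "balanced_exponent_pairs k N \<subseteq> ?D \<times> ?D" unfolding balanced_exponent_pairs_def by blast
  qed (use assms in \<open>auto split: prod.splits\<close>)
  also have "\<dots> = (\<Sum>e\<in>?D. x ^ sum e {..<k})\<^sup>2"
    by (simp add: power2_eq_square sum_product sum.cartesian_product)
  also have "\<dots> = ((\<Sum>b=0..N. x ^ b) ^ k)\<^sup>2"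
    by (simp only: sum_power_sum_PiE)
  finally show ?thesis .
qed

text \<open>The pair of zero exponent vectors contributes \<open>1\<close>; in every other balanced pair both
  vectors are nonzero.\<close>

lemma local_factor_le_one_add_square:
  fixes x :: real
  assumes "0 \<le> x"
  shows "local_factor k N x \<le> 1 + ((\<Sum>b=0..N. x ^ b) ^ k - 1)\<^sup>2"
proof -
  let ?D = "PiE {..<k} (\<lambda>_. {0..N})"
  let ?B = "balanced_exponent_pairs k N"
  let ?f = "\<lambda>e. x ^ sum e {..<k}"
  define z where "z = (\<lambda>j\<in>{..<k}. 0::nat)"
  have zD: "z \<in> ?D" and fz: "?f z = 1" by (simp_all add: z_def)
  have finD: "finite ?D" by (simp add: finite_PiE)
  have eq_z: "e = z \<longleftrightarrow> sum e {..<k} = 0" if "e \<in> ?D" for e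
  proof
    assume "sum e {..<k} = 0"
    then show "e = z" by (intro PiE_ext[OF that zD]) (simp add: z_def)
  qed (simp add: z_def)
  have sub: "?B - {(z, z)} \<subseteq> (?D - {z}) \<times> (?D - {z})"
  proof
    fix b assume b: "b \<in> ?B - {(z, z)}"
    obtain e e' where b_eq: "b = (e, e')" by (cases b)
    have "e \<in> ?D" "e' \<in> ?D" "sum e {..<k} = sum e' {..<k}" "(e, e') \<noteq> (z, z)"
      using b unfolding b_eq balanced_exponent_pairs_def by simp_all
    then show "b \<in> (?D - {z}) \<times> (?D - {z})" unfolding b_eq using eq_z by auto
  qed
  have "(\<Sum>(e, e') \<in> ?B - {(z, z)}. ?f e * ?f e')
      \<le> (\<Sum>(e, e') \<in> (?D - {z}) \<times> (?D - {z}). ?f e * ?f e')"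
    by (rule sum_mono2[OF _ sub]) (use finD assms in \<open>auto split: prod.splits\<close>)
  also have "\<dots> = (sum ?f (?D - {z}))\<^sup>2"
    by (simp add: power2_eq_square sum_product sum.cartesian_product)
  also have "sum ?f (?D - {z}) = (\<Sum>b=0..N. x ^ b) ^ k - 1"
    using finD zD fz by (simp only: sum_diff1 if_True sum_power_sum_PiE)
  finally have rest: "(\<Sum>(e, e') \<in> ?B - {(z, z)}. ?f e * ?f e') \<le> ((\<Sum>b=0..N. x ^ b) ^ k - 1)\<^sup>2" .
  have "(z, z) \<in> ?B" using zD by (simp add: balanced_exponent_pairs_def)
  from sum.remove[OF finite_balanced_exponent_pairs this, of "\<lambda>(e, e'). ?f e * ?f e'"]
  have "local_factor k N x = ?f z * ?f z + (\<Sum>(e, e') \<in> ?B - {(z, z)}. ?f e * ?f e')"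
    unfolding local_factor_def by (simp only: prod.case)
  then show ?thesis using fz rest by simp
qed

lemma local_factor_le_exp_linear:
  fixes x r :: real
  assumes "0 \<le> x" "x \<le> r" "r < 1"
  shows "local_factor k N x \<le> exp (2 * real k / (1 - r) * x)"
proof -
  have "(\<Sum>b=0..N. x ^ b) \<le> 1 / (1 - x)" using assms by (intro sum_power_atMost_le) auto
  also have "\<dots> = 1 + x / (1 - x)" using assms by (simp add: field_simps)
  also have "\<dots> \<le> exp (x / (1 - x))" by (rule exp_ge_add_one_self)
  also have "\<dots> \<le> exp (x / (1 - r))" using assms by (intro exp_mono divide_left_mono) auto
  finally have "(\<Sum>b=0..N. x ^ b) \<le> exp (x / (1 - r))" .
  moreover have "0 \<le> (\<Sum>b=0..N. x ^ b)" using assms(1) by (intro sum_nonneg) auto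
  ultimately have "(\<Sum>b=0..N. x ^ b) ^ (2 * k) \<le> exp (x / (1 - r)) ^ (2 * k)"
    by (intro power_mono)
  also have "\<dots> = exp (2 * real k / (1 - r) * x)" by (subst exp_of_nat_mult[symmetric]) simp
  finally show ?thesis
    using local_factor_le_square[OF assms(1), of k N] by (simp add: power_mult[symmetric] mult.commute)
qed

lemma local_factor_le_exp_quadratic:
  fixes x :: real
  assumes "0 \<le> x" "1 \<le> k" "real k * x \<le> 1/2"
  shows "local_factor k N x \<le> exp ((real k * x)\<^sup>2 + 6 * (real k * x) ^ 3)"
proof -
  define t where "t = real k * x"
  define G where "G = (\<Sum>b=0..N. x ^ b) ^ k"
  have t: "0 \<le> t" "t \<le> 1/2" using assms by (simp_all add: t_def)
  have "x \<le> t" using assms by (simp add: t_def mult_le_cancel_right1)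
  then have x1: "x < 1" using t by simp
  have "1 \<le> G" unfolding G_def using one_le_sum_power_atMost[OF assms(1)] by simp
  have "G \<le> (1 / (1 - x)) ^ k"
    unfolding G_def using sum_power_atMost_le[OF assms(1) x1] assms(1)
    by (intro power_mono sum_nonneg) auto
  also have "\<dots> \<le> 1 / (1 - t)"
  proof -
    have "1 + real k * (-x) \<le> (1 + (-x)) ^ k" using x1 by (intro Bernoulli_inequality) auto
    then show ?thesis using x1 t by (simp add: t_def power_divide divide_left_mono)
  qed
  finally have "G - 1 \<le> t / (1 - t)" using t by (simp add: field_simps)
  then have "(G - 1)\<^sup>2 \<le> (t / (1 - t))\<^sup>2" using \<open>1 \<le> G\<close> by (intro power_mono) auto
  also have "\<dots> \<le> t\<^sup>2 + 6 * t ^ 3" using t by (rule square_div_one_minus_le)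
  finally have "1 + (G - 1)\<^sup>2 \<le> exp (t\<^sup>2 + 6 * t ^ 3)"
    using exp_ge_add_one_self[of "t\<^sup>2 + 6 * t ^ 3"] by linarith
  then show ?thesis using local_factor_le_one_add_square[OF assms(1), of k N] by (simp add: G_def t_def)
qed

section \<open>Partial sums as Euler products\<close>

lemma sum_lessThan_add: "(\<Sum>j<a + b. g j) = (\<Sum>j<a. g j) + (\<Sum>j<b. g (a + j))"
  for g :: "nat \<Rightarrow> 'a::comm_monoid_add"
  by (induction b) (simp_all add: add.assoc)

definition exponent_pairs :: "nat \<Rightarrow> nat \<Rightarrow> (nat \<Rightarrow> nat) \<Rightarrow> nat \<Rightarrow> (nat \<Rightarrow> nat) \<times> (nat \<Rightarrow> nat)" where
  "exponent_pairs k N n = (\<lambda>p \<in> {p. prime p \<and> p \<le> N}.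
    ((\<lambda>j\<in>{..<k}. multiplicity p (n j)), (\<lambda>j\<in>{..<k}. multiplicity p (n (k + j)))))"

lemma tuples_memD:
  assumes "n \<in> tuples k"
  shows "\<And>j. j < 2 * k \<Longrightarrow> 1 \<le> n j" "\<And>j. 2 * k \<le> j \<Longrightarrow> n j = 0"
    "(\<Prod>j<k. n j) = (\<Prod>j\<in>{k..<2*k}. n j)"
  using assms unfolding tuples_def by auto

lemma prod_tuple_eq_prod_exponent_pairs:
  fixes \<rho> c :: real
  assumes n: "n \<in> tuples k" and N: "\<And>j. j < 2 * k \<Longrightarrow> n j \<le> N"
  shows "(\<Prod>j<2*k. \<rho> ^ bigOmega (n j) * real (n j) powr (-c))
    = (\<Prod>p | prime p \<and> p \<le> N. case exponent_pairs k N n p of (e, e') \<Rightarrow>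
        (\<rho> * real p powr (-c)) ^ sum e {..<k} * (\<rho> * real p powr (-c)) ^ sum e' {..<k})"
proof -
  let ?x = "\<lambda>p::nat. \<rho> * real p powr (-c)"
  have "(\<Prod>j<2*k. \<rho> ^ bigOmega (n j) * real (n j) powr (-c))
      = (\<Prod>j<2*k. \<Prod>p | prime p \<and> p \<le> N. ?x p ^ multiplicity p (n j))"
    using tuples_memD(1)[OF n] N by (intro prod.cong refl power_bigOmega_mult_powr_eq_prod) auto
  also have "\<dots> = (\<Prod>p | prime p \<and> p \<le> N. ?x p ^ (\<Sum>j<k + k. multiplicity p (n j)))"
    by (subst prod.swap) (simp add: power_sum mult_2)
  also have "\<dots> = (\<Prod>p | prime p \<and> p \<le> N. case exponent_pairs k N n p of (e, e') \<Rightarrow>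
        ?x p ^ sum e {..<k} * ?x p ^ sum e' {..<k})"
    by (intro prod.cong refl) (simp add: exponent_pairs_def sum_lessThan_add power_add)
  finally show ?thesis .
qed

lemma exponent_pairs_in_PiE:
  assumes n: "n \<in> tuples k" and N: "\<And>j. j < 2 * k \<Longrightarrow> n j \<le> N"
  shows "exponent_pairs k N n \<in> PiE {p. prime p \<and> p \<le> N} (\<lambda>_. balanced_exponent_pairs k N)"
  unfolding exponent_pairs_def restrict_PiE_iff
proof (intro ballI)
  fix p assume "p \<in> {p. prime p \<and> p \<le> N}"
  then have p: "prime p" by simp
  have le: "multiplicity p (n j) \<le> N" if "j < 2 * k" for j
    using multiplicity_le_self[of "n j" p] tuples_memD(1)[OF n that] p N[OF that] by simp
  have nz_sub: "0 \<notin> n ` A" if "A \<subseteq> {..<2*k}" for A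
  proof
    assume "0 \<in> n ` A"
    then obtain j where "j \<in> A" "n j = 0" by auto
    then show False using that tuples_memD(1)[OF n, of j] by auto
  qed
  have nz: "0 \<notin> n ` {..<k}" "0 \<notin> n ` {k..<2*k}" by (simp_all add: nz_sub subset_eq)
  have "(\<Sum>j<k. multiplicity p (n j)) = multiplicity p (\<Prod>j<k. n j)"
    using p nz by (subst prime_elem_multiplicity_prod_distrib) auto
  also have "\<dots> = multiplicity p (\<Prod>j\<in>{k..<2*k}. n j)" using tuples_memD(3)[OF n] by simp
  also have "\<dots> = (\<Sum>j\<in>{k..<2*k}. multiplicity p (n j))"
    using p nz by (subst prime_elem_multiplicity_prod_distrib) auto
  also have "\<dots> = (\<Sum>j<k. multiplicity p (n (k + j)))"
    by (simp add: mult_2 sum.shift_bounds_nat_ivl[of _ 0 k k, simplified] lessThan_atLeast0 add.commute)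
  finally show "((\<lambda>j\<in>{..<k}. multiplicity p (n j)), (\<lambda>j\<in>{..<k}. multiplicity p (n (k + j))))
      \<in> balanced_exponent_pairs k N"
    using le by (auto simp: balanced_exponent_pairs_def)
qed

lemma inj_on_exponent_pairs:
  assumes "T \<subseteq> tuples k" and N: "\<And>n j. n \<in> T \<Longrightarrow> j < 2 * k \<Longrightarrow> n j \<le> N"
  shows "inj_on (exponent_pairs k N) T"
proof (rule inj_onI, rule ext)
  fix n n' j assume n: "n \<in> T" and n': "n' \<in> T" and eq: "exponent_pairs k N n = exponent_pairs k N n'"
  have tup: "n \<in> tuples k" "n' \<in> tuples k" using n n' assms(1) by auto
  show "n j = n' j"
  proof (cases "j < 2 * k")
    case True
    show ?thesis
    proof (rule multiplicity_eq_nat)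
      show pos: "0 < n j" "0 < n' j"
        using tuples_memD(1)[OF tup(1) True] tuples_memD(1)[OF tup(2) True] by simp_all
      fix p :: nat assume p: "prime p"
      show "multiplicity p (n j) = multiplicity p (n' j)"
      proof (cases "p \<le> N")
        case True
        then have "fst (exponent_pairs k N n p) j = fst (exponent_pairs k N n' p) j"
          "snd (exponent_pairs k N n p) (j - k) = snd (exponent_pairs k N n' p) (j - k)"
          using eq by simp_all
        moreover have "\<not> j < k \<Longrightarrow> k + (j - k) = j \<and> j - k < k" using \<open>j < 2 * k\<close> by simp
        ultimately show ?thesis
          using p True by (cases "j < k") (simp_all add: exponent_pairs_def)
      next
        case False
        then have "\<not> p dvd n j" "\<not> p dvd n' j"
          using N[OF n True] N[OF n' True] pos by (auto dest!: dvd_imp_le)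
        then show ?thesis by (simp add: not_dvd_imp_multiplicity_0)
      qed
    qed
  next
    case False
    then show ?thesis using tuples_memD(2)[OF tup(1)] tuples_memD(2)[OF tup(2)] by simp
  qed
qed

lemma sum_tuples_le_prod_local_factor:
  fixes \<rho> c :: real
  assumes T: "finite T" "T \<subseteq> tuples k" and N: "\<And>n j. n \<in> T \<Longrightarrow> j < 2 * k \<Longrightarrow> n j \<le> N"
    and "0 \<le> \<rho>"
  shows "(\<Sum>n\<in>T. \<Prod>j<2*k. \<rho> ^ bigOmega (n j) * real (n j) powr (-c))
    \<le> (\<Prod>p | prime p \<and> p \<le> N. local_factor k N (\<rho> * real p powr (-c)))"
proof -
  define P where "P = {p::nat. prime p \<and> p \<le> N}"
  define B where "B = balanced_exponent_pairs k N"
  define g where "g p = (\<lambda>(e, e'). (\<rho> * real p powr (-c)) ^ sum e {..<k} * (\<rho> * real p powr (-c)) ^ sum e' {..<k})"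
    for p :: nat
  have "finite P" by (simp add: P_def)
  have "(\<Sum>n\<in>T. \<Prod>j<2*k. \<rho> ^ bigOmega (n j) * real (n j) powr (-c))
      = (\<Sum>n\<in>T. \<Prod>p\<in>P. g p (exponent_pairs k N n p))"
  proof (rule sum.cong[OF refl])
    fix n assume "n \<in> T"
    then show "(\<Prod>j<2*k. \<rho> ^ bigOmega (n j) * real (n j) powr (-c)) = (\<Prod>p\<in>P. g p (exponent_pairs k N n p))"
      using T N prod_tuple_eq_prod_exponent_pairs[of n k N \<rho> c] by (simp add: g_def P_def subset_eq)
  qed
  also have "\<dots> = (\<Sum>E\<in>exponent_pairs k N ` T. \<Prod>p\<in>P. g p (E p))"
    using inj_on_exponent_pairs[of T k N] T N by (simp add: sum.reindex)
  also have "\<dots> \<le> (\<Sum>E\<in>PiE P (\<lambda>_. B). \<Prod>p\<in>P. g p (E p))"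
  proof (rule sum_mono2)
    show "finite (PiE P (\<lambda>_. B))"
      using \<open>finite P\<close> by (simp add: B_def finite_PiE finite_balanced_exponent_pairs)
    show "exponent_pairs k N ` T \<subseteq> PiE P (\<lambda>_. B)"
      using T N unfolding P_def B_def by (intro image_subsetI exponent_pairs_in_PiE) auto
    show "0 \<le> (\<Prod>p\<in>P. g p (E p))" for E
      using \<open>0 \<le> \<rho>\<close> by (intro prod_nonneg) (simp add: g_def split: prod.splits)
  qed
  also have "\<dots> = (\<Prod>p\<in>P. \<Sum>b\<in>B. g p b)"
    using \<open>finite P\<close> by (simp add: prod_sum_PiE B_def finite_balanced_exponent_pairs)
  also have "\<dots> = (\<Prod>p\<in>P. local_factor k N (\<rho> * real p powr (-c)))"
    by (simp add: local_factor_def g_def B_def)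
  finally show ?thesis by (simp add: P_def)
qed

section \<open>Small and large primes\<close>

lemma prod_local_factor_le_exp_sqrt:
  fixes \<rho> \<sigma> r :: real
  assumes "0 \<le> \<rho>" "0 \<le> \<sigma>" "\<rho> / sqrt 2 \<le> r" "r < 1" "Q \<subseteq> {2..M}"
  shows "(\<Prod>p\<in>Q. local_factor k N (\<rho> * real p powr (-(1/2 + \<sigma>))))
    \<le> exp (4 * real k * \<rho> * sqrt (real M) / (1 - r))"
proof -
  define x where "x p = \<rho> * real p powr (-(1/2 + \<sigma>))" for p :: nat
  have x0: "0 \<le> x p" for p using assms(1) by (simp add: x_def)
  have x_le: "x p \<le> \<rho> / sqrt (real p)" if "1 \<le> p" for p
  proof -
    have "real p powr (-(1/2 + \<sigma>)) \<le> real p powr (-(1/2))"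
      using that assms(2) by (intro powr_mono) auto
    also have "\<dots> = 1 / sqrt (real p)" by (simp add: powr_minus_divide powr_half_sqrt)
    finally have "\<rho> * real p powr (-(1/2 + \<sigma>)) \<le> \<rho> * (1 / sqrt (real p))"
      using assms(1) by (rule mult_left_mono)
    then show ?thesis by (simp add: x_def)
  qed
  have "x p \<le> r" if "p \<in> Q" for p
  proof -
    have "2 \<le> p" using that assms(5) by auto
    then have "\<rho> / sqrt (real p) \<le> \<rho> / sqrt 2" using assms(1) by (intro divide_left_mono) auto
    then show ?thesis using x_le[of p] \<open>2 \<le> p\<close> assms(3) by simp
  qed
  then have "local_factor k N (x p) \<le> exp (2 * real k / (1 - r) * x p)" if "p \<in> Q" for p
    using x0 that assms(4) by (intro local_factor_le_exp_linear)
  then have "(\<Prod>p\<in>Q. local_factor k N (x p)) \<le> (\<Prod>p\<in>Q. exp (2 * real k / (1 - r) * x p))"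
    by (intro prod_mono) (simp add: x0 local_factor_nonneg)
  also have "\<dots> = exp (2 * real k / (1 - r) * (\<Sum>p\<in>Q. x p))"
    using finite_subset[OF assms(5) finite_atLeastAtMost] by (simp only: exp_sum sum_distrib_left)
  also have "\<dots> \<le> exp (2 * real k / (1 - r) * (2 * \<rho> * sqrt (real M)))"
  proof (intro exp_mono mult_left_mono)
    have "(\<Sum>p\<in>Q. x p) \<le> (\<Sum>p\<in>Q. \<rho> / sqrt (real p))"
      using assms(5) x_le by (intro sum_mono) auto
    also have "\<dots> \<le> (\<Sum>n=1..M. \<rho> / sqrt (real n))"
      using assms(1,5) by (intro sum_mono2) auto
    also have "\<dots> = \<rho> * (\<Sum>n=1..M. 1 / sqrt (real n))" by (simp add: sum_distrib_left)
    also have "\<dots> \<le> \<rho> * (2 * sqrt (real M))"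
      by (intro mult_left_mono sum_inverse_sqrt_le assms(1))
    finally show "(\<Sum>p\<in>Q. x p) \<le> 2 * \<rho> * sqrt (real M)" by simp
  qed (use assms(4) in simp)
  finally show ?thesis by (simp add: x_def mult.assoc)
qed

lemma local_factor_le_exp_powr:
  fixes \<rho> \<sigma> K :: real
  assumes "0 \<le> \<rho>" "0 \<le> \<sigma>" "1 \<le> k" "K = (real k * \<rho>)\<^sup>2" "4 * K < real p"
  shows "local_factor k N (\<rho> * real p powr (-(1/2 + \<sigma>)))
    \<le> exp (K * real p powr (-(1 + 2 * \<sigma>)) + 6 * (K * sqrt K / (real p * sqrt (real p))))"
proof -
  define t where "t = real k * (\<rho> * real p powr (-(1/2 + \<sigma>)))"
  have "0 \<le> K" using assms(4) by simp
  then have p0: "0 < real p" using assms(5) by linarith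
  have t0: "0 \<le> t" using assms(1) by (simp add: t_def)
  have "-(1 + 2 * \<sigma>) = of_nat 2 * (-(1/2 + \<sigma>))" by simp
  then have "real p powr (-(1 + 2 * \<sigma>)) = (real p powr (-(1/2 + \<sigma>)))\<^sup>2"
    using p0 by (simp only: powr_power)
  then have "t\<^sup>2 = K * real p powr (-(1 + 2 * \<sigma>))"
    using assms(4) by (simp add: t_def power_mult_distrib)
  also have "\<dots> \<le> K / real p"
    using p0 assms(2,4) powr_mono[of "-(1 + 2 * \<sigma>)" "-1" "real p"]
    by (cases "1 \<le> real p") (auto simp: powr_neg_one divide_inverse mult_left_mono)
  finally have t_sq: "t\<^sup>2 \<le> K / real p" .
  moreover have "K / real p \<le> (1/2)\<^sup>2" using assms(5) p0 by (simp add: power2_eq_square divide_le_eq)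
  ultimately have "t\<^sup>2 \<le> (1/2)\<^sup>2" by linarith
  then have "t \<le> 1/2" by (rule power2_le_imp_le) simp
  then have "local_factor k N (\<rho> * real p powr (-(1/2 + \<sigma>))) \<le> exp (t\<^sup>2 + 6 * t ^ 3)"
    using assms(1,3) by (simp add: t_def local_factor_le_exp_quadratic)
  moreover have "t ^ 3 \<le> K * sqrt K / (real p * sqrt (real p))"
  proof -
    have "t \<le> sqrt (K / real p)" using t_sq t0 by (simp add: real_le_rsqrt)
    then have "t\<^sup>2 * t \<le> (K / real p) * sqrt (K / real p)"
      using t_sq t0 \<open>0 \<le> K\<close> by (intro mult_mono) auto
    then show ?thesis by (simp add: power3_eq_cube power2_eq_square real_sqrt_divide mult.assoc)
  qed
  then have "exp (t\<^sup>2 + 6 * t ^ 3)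
      \<le> exp (K * real p powr (-(1 + 2 * \<sigma>)) + 6 * (K * sqrt K / (real p * sqrt (real p))))"
    using \<open>t\<^sup>2 = K * real p powr (-(1 + 2 * \<sigma>))\<close> by simp
  ultimately show ?thesis by linarith
qed

lemma prod_local_factor_le_exp_sum_powr:
  fixes \<rho> \<sigma> K :: real
  assumes "0 \<le> \<rho>" "0 \<le> \<sigma>" "1 \<le> k" "K = (real k * \<rho>)\<^sup>2" "0 < K" "K \<le> real M" "4 * K < real M + 1"
    and Q: "finite Q" "Q \<subseteq> {M<..}"
  shows "(\<Prod>p\<in>Q. local_factor k N (\<rho> * real p powr (-(1/2 + \<sigma>))))
    \<le> exp (K * (\<Sum>p\<in>Q. real p powr (-(1 + 2 * \<sigma>))) + 12 * K)"
proof -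
  have "local_factor k N (\<rho> * real p powr (-(1/2 + \<sigma>)))
      \<le> exp (K * real p powr (-(1 + 2 * \<sigma>)) + 6 * (K * sqrt K * (1 / (real p * sqrt (real p)))))"
    if "p \<in> Q" for p
    using local_factor_le_exp_powr[OF assms(1-4), of p N] assms(7) Q(2) that by force
  then have "(\<Prod>p\<in>Q. local_factor k N (\<rho> * real p powr (-(1/2 + \<sigma>))))
      \<le> (\<Prod>p\<in>Q. exp (K * real p powr (-(1 + 2 * \<sigma>)) + 6 * (K * sqrt K * (1 / (real p * sqrt (real p))))))"
    using assms(1) by (intro prod_mono conjI local_factor_nonneg mult_nonneg_nonneg) auto
  also have "\<dots> = exp (\<Sum>p\<in>Q. K * real p powr (-(1 + 2 * \<sigma>))
      + 6 * (K * sqrt K * (1 / (real p * sqrt (real p)))))"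
    by (rule exp_sum[symmetric, OF Q(1)])
  also have "\<dots> = exp (K * (\<Sum>p\<in>Q. real p powr (-(1 + 2 * \<sigma>)))
      + 6 * (K * sqrt K * (\<Sum>p\<in>Q. 1 / (real p * sqrt (real p)))))"
    by (simp only: sum.distrib sum_distrib_left)
  also have "\<dots> \<le> exp (K * (\<Sum>p\<in>Q. real p powr (-(1 + 2 * \<sigma>))) + 12 * K)"
  proof -
    have "1 \<le> M" using assms(5,6) by simp
    moreover have "2 / sqrt (real M) \<le> 2 / sqrt K"
      using assms(5,6) by (intro divide_left_mono) auto
    ultimately have "(\<Sum>p\<in>Q. 1 / (real p * sqrt (real p))) \<le> 2 / sqrt K"
      using sum_inverse_pow_three_halves_greaterThan_le[OF _ Q] by force
    then have "K * sqrt K * (\<Sum>p\<in>Q. 1 / (real p * sqrt (real p))) \<le> K * sqrt K * (2 / sqrt K)"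
      using assms(5) by (intro mult_left_mono) auto
    then show ?thesis using assms(5) by simp
  qed
  finally show ?thesis .
qed

text \<open>The primes in \<open>Q\<close> exceed \<open>M\<close>, so the Euler product over them, multiplied with the one
  over the primes up to \<open>M\<close>, still lies below \<open>\<zeta>(s) \<le> 1 + 1/(s - 1)\<close>; the latter product
  dominates \<open>\<Sum>\<^sub>n\<^sub>\<le>\<^sub>M n^(-s)\<close>.\<close>

lemma sum_powr_primes_greaterThan_le_ln:
  fixes s :: real
  assumes s: "1 < s" and M: "1 \<le> M" and Q: "finite Q" "\<And>p. p \<in> Q \<Longrightarrow> prime p" "Q \<subseteq> {M<..}"
  shows "(\<Sum>p\<in>Q. real p powr (-s)) \<le> ln ((1 + 1 / (s - 1)) / (\<Sum>n=1..M. real n powr (-s)))"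
proof -
  define u where "u p = real p powr (-s)" for p :: nat
  define H where "H = (\<Sum>n=1..M. real n powr (-s))"
  define X where "X = (\<Prod>p\<in>Q. \<Sum>a=0..2::nat. u p ^ a)"
  define Q' where "Q' = {p::nat. prime p \<and> p \<le> M}"
  define A where "A p = (if p \<le> M then M else 2)" for p :: nat
  have factor_pos: "0 < (\<Sum>a=0..2::nat. u p ^ a)" for p
    using one_le_sum_power_atMost[of "u p" 2] by (simp add: u_def)
  then have "0 < X" by (simp add: X_def prod_pos)
  have "H \<le> (\<Prod>p\<in>Q'. \<Sum>a=0..M. u p ^ a)"
    unfolding H_def u_def Q'_def by (rule sum_powr_le_prod_sum_prime_powers) simp
  then have "H * X \<le> (\<Prod>p\<in>Q'. \<Sum>a=0..M. u p ^ a) * X"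
    using \<open>0 < X\<close> by (intro mult_right_mono) auto
  also have "\<dots> = (\<Prod>p\<in>Q' \<union> Q. \<Sum>a=0..A p. u p ^ a)"
  proof -
    have fin: "finite Q'" and disj: "Q' \<inter> Q = {}" using Q(3) by (auto simp: Q'_def)
    have "(\<Prod>p\<in>Q' \<union> Q. \<Sum>a=0..A p. u p ^ a)
        = (\<Prod>p\<in>Q'. \<Sum>a=0..A p. u p ^ a) * (\<Prod>p\<in>Q. \<Sum>a=0..A p. u p ^ a)"
      by (rule prod.union_disjoint[OF fin Q(1) disj])
    moreover have "(\<Prod>p\<in>Q'. \<Sum>a=0..A p. u p ^ a) = (\<Prod>p\<in>Q'. \<Sum>a=0..M. u p ^ a)"
      by (intro prod.cong) (auto simp: A_def Q'_def)
    moreover have "(\<Prod>p\<in>Q. \<Sum>a=0..A p. u p ^ a) = X"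
      using Q(3) by (auto simp: X_def A_def intro!: prod.cong)
    ultimately show ?thesis by simp
  qed
  also have "\<dots> \<le> 1 + 1 / (s - 1)"
    unfolding u_def using Q s by (intro prod_sum_prime_powers_le) (auto simp: Q'_def)
  finally have "H * X \<le> 1 + 1 / (s - 1)" .
  moreover have "0 < H" using M by (simp add: H_def sum.atLeast_Suc_atMost add_pos_nonneg sum_nonneg)
  ultimately have X_le: "X \<le> (1 + 1 / (s - 1)) / H" by (simp add: le_divide_eq mult.commute)
  have "(\<Sum>p\<in>Q. u p) \<le> (\<Sum>p\<in>Q. ln (\<Sum>a=0..2::nat. u p ^ a))"
  proof (rule sum_mono)
    fix p assume "p \<in> Q"
    then have "1 \<le> real p" using Q(2) prime_ge_1_nat by auto
    then have "u p \<le> 1" using s powr_mono[of "-s" 0 "real p"] by (simp add: u_def)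
    then show "u p \<le> ln (\<Sum>a=0..2::nat. u p ^ a)"
      using le_ln_one_add_add_square[of "u p"] by (simp add: u_def numeral_2_eq_2)
  qed
  also have "\<dots> = ln X"
    unfolding X_def using factor_pos by (intro ln_prod[symmetric, OF Q(1)]) (simp add: less_imp_neq[symmetric])
  also have "\<dots> \<le> ln ((1 + 1 / (s - 1)) / H)"
    using X_le \<open>0 < X\<close> by simp
  finally show ?thesis by (simp add: u_def H_def)
qed

lemma exp_mult_ln_le_sum_powr:
  fixes y a :: real
  assumes "1 \<le> y" "real M \<le> y" "y < real M + 1" "0 \<le> a"
  shows "exp (-a * ln y) * ln y \<le> (\<Sum>n=1..M. real n powr (-(1 + a)))"
proof -
  have "ln y \<le> ln (real M + 1)" using assms(1,3) by simp
  also have "\<dots> \<le> harm M" by (rule ln_le_harm)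
  finally have "ln y \<le> harm M" .
  then have "exp (-a * ln y) * ln y \<le> exp (-a * ln y) * harm M" by simp
  also have "\<dots> = (\<Sum>n=1..M. y powr (-a) * (1 / real n))"
    using assms(1) by (simp add: harm_def sum_distrib_left powr_def divide_inverse)
  also have "\<dots> \<le> (\<Sum>n=1..M. real n powr (-(1 + a)))"
  proof (rule sum_mono)
    fix n assume n: "n \<in> {1..M}"
    then have "y powr (-a) \<le> real n powr (-a)"
      using assms by (intro powr_mono2') auto
    then have "y powr (-a) * (1 / real n) \<le> real n powr (-a) * (1 / real n)"
      using n by (intro mult_right_mono) auto
    also have "\<dots> = real n powr (-(1 + a))"
      using n by (simp add: powr_diff powr_minus_divide)
    finally show "y powr (-a) * (1 / real n) \<le> real n powr (-(1 + a))" .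
  qed
  finally show ?thesis .
qed

lemma prod_local_factor_le_exp:
  fixes \<rho> \<sigma> r K :: real
  assumes "1 \<le> k" "0 \<le> \<rho>" "0 < \<sigma>" "\<rho> / sqrt 2 \<le> r" "r < 1" and K: "K = (real k * \<rho>)\<^sup>2" "1 < K"
  shows "(\<Prod>p | prime p \<and> p \<le> N. local_factor k N (\<rho> * real p powr (-(1/2 + \<sigma>))))
    \<le> exp (8 * K / (1 - r)
        + K * ln ((1 + 1 / (2 * \<sigma>)) / (\<Sum>n=1..nat \<lfloor>4 * K\<rfloor>. real n powr (-(1 + 2 * \<sigma>))))
        + 12 * K)"
proof -
  define M where "M = nat \<lfloor>4 * K\<rfloor>"
  define L where "L p = local_factor k N (\<rho> * real p powr (-(1/2 + \<sigma>)))" for p :: nat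
  define P1 where "P1 = {p. prime p \<and> p \<le> N \<and> p \<le> M}"
  define P2 where "P2 = {p. prime p \<and> p \<le> N \<and> M < p}"
  have M: "real M \<le> 4 * K" "4 * K < real M + 1" "K \<le> real M" "1 \<le> M"
    using K(2) by (simp_all add: M_def) linarith+
  have "(\<Prod>p | prime p \<and> p \<le> N. L p) = (\<Prod>p\<in>P1. L p) * (\<Prod>p\<in>P2. L p)"
    by (subst prod.union_disjoint[symmetric]) (auto simp: P1_def P2_def intro!: prod.cong)
  also have "\<dots> \<le> exp (8 * K / (1 - r))
      * exp (K * ln ((1 + 1 / (2 * \<sigma>)) / (\<Sum>n=1..M. real n powr (-(1 + 2 * \<sigma>)))) + 12 * K)"
  proof (rule mult_mono)
    have "sqrt (real M) \<le> 2 * (real k * \<rho>)"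
      using M(1) K(1) assms(2) by (simp add: real_le_lsqrt)
    then have "4 * real k * \<rho> * sqrt (real M) \<le> 4 * real k * \<rho> * (2 * (real k * \<rho>))"
      using assms(2) by (intro mult_left_mono) auto
    also have "\<dots> = 8 * K" using K(1) by (simp add: power2_eq_square)
    finally have "4 * real k * \<rho> * sqrt (real M) / (1 - r) \<le> 8 * K / (1 - r)"
      using assms(5) by (intro divide_right_mono) auto
    moreover have "(\<Prod>p\<in>P1. L p) \<le> exp (4 * real k * \<rho> * sqrt (real M) / (1 - r))"
      unfolding L_def using assms(2-5) by (intro prod_local_factor_le_exp_sqrt) (auto simp: P1_def prime_ge_2_nat)
    ultimately show "(\<Prod>p\<in>P1. L p) \<le> exp (8 * K / (1 - r))" by (meson exp_mono order_trans)
    have "finite P2" "\<And>p. p \<in> P2 \<Longrightarrow> prime p" "P2 \<subseteq> {M<..}" by (auto simp: P2_def)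
    from sum_powr_primes_greaterThan_le_ln[OF _ M(4) this, of "1 + 2 * \<sigma>"] assms(3) K(2)
    have "K * (\<Sum>p\<in>P2. real p powr (-(1 + 2 * \<sigma>))) + 12 * K
        \<le> K * ln ((1 + 1 / (2 * \<sigma>)) / (\<Sum>n=1..M. real n powr (-(1 + 2 * \<sigma>)))) + 12 * K"
      by simp
    moreover have "(\<Prod>p\<in>P2. L p) \<le> exp (K * (\<Sum>p\<in>P2. real p powr (-(1 + 2 * \<sigma>))) + 12 * K)"
      unfolding L_def using assms(1-3) K M by (intro prod_local_factor_le_exp_sum_powr) (auto simp: P2_def)
    ultimately show "(\<Prod>p\<in>P2. L p)
        \<le> exp (K * ln ((1 + 1 / (2 * \<sigma>)) / (\<Sum>n=1..M. real n powr (-(1 + 2 * \<sigma>)))) + 12 * K)"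
      by (meson exp_mono order_trans)
  qed (auto simp: L_def assms(2) local_factor_nonneg intro!: prod_nonneg)
  finally show ?thesis by (simp add: L_def M_def exp_add)
qed

lemma sigma_mult_ln_le_five:
  fixes \<rho> \<sigma> K :: real
  assumes "2 \<le> k" "K = (real k)\<^sup>2 * \<rho>\<^sup>2" "0 < K" "0 \<le> \<rho>" "\<rho> \<le> sqrt 2" "0 < \<sigma>" "\<sigma> \<le> 1 / ln (real k)"
  shows "\<sigma> * ln (4 * K) \<le> 5"
proof -
  have "\<rho>\<^sup>2 \<le> 2" using assms(4,5) power_mono[of \<rho> "sqrt 2" 2] by simp
  then have "4 * K \<le> 2 ^ 3 * (real k)\<^sup>2"
    using assms(2) mult_right_mono[of "\<rho>\<^sup>2" 2 "(real k)\<^sup>2"] by simp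
  also have "\<dots> \<le> real k ^ 3 * (real k)\<^sup>2"
    using assms(1) by (intro mult_right_mono power_mono) auto
  also have "\<dots> = real k ^ 5" by (simp add: power_add[symmetric])
  finally have "ln (4 * K) \<le> ln (real k ^ 5)"
    using assms(1,3) by (subst ln_le_cancel_iff) auto
  then have "ln (4 * K) \<le> 5 * ln (real k)" using assms(1) by (simp add: ln_realpow)
  then have "\<sigma> * ln (4 * K) \<le> 5 * (\<sigma> * ln (real k))"
    using mult_left_mono[of _ _ \<sigma>] assms(6) by fastforce
  moreover have "0 < ln (real k)" using assms(1) by simp
  then have "\<sigma> * ln (real k) \<le> 1" using assms(7) by (simp add: le_divide_eq)
  ultimately show ?thesis by linarith
qed

lemma ln_ln_le_ln_sum_powr:
  fixes \<sigma> K :: real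
  assumes "1 < K" "0 < \<sigma>" "\<sigma> * ln (4 * K) \<le> 5"
  defines "H \<equiv> \<Sum>n=1..nat \<lfloor>4 * K\<rfloor>. real n powr (-(1 + 2 * \<sigma>))"
  shows "0 < H" "ln (ln K) - 10 \<le> ln H"
proof -
  have "exp (-10) * ln K \<le> exp (-2 * \<sigma> * ln (4 * K)) * ln (4 * K)"
    using assms(1-3) by (intro mult_mono) auto
  also have "\<dots> \<le> H"
    using assms(1,2) exp_mult_ln_le_sum_powr[of "4 * K" "nat \<lfloor>4 * K\<rfloor>" "2 * \<sigma>"] by (simp add: H_def)
  finally have "exp (-10) * ln K \<le> H" .
  moreover have "0 < exp (-10) * ln K" using assms(1) by simp
  ultimately show "0 < H" by linarith
  with \<open>exp (-10) * ln K \<le> H\<close> \<open>0 < exp (-10) * ln K\<close> have "ln (exp (-10) * ln K) \<le> ln H" by simp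
  then show "ln (ln K) - 10 \<le> ln H" using assms(1) by (simp add: ln_mult)
qed

lemma ln_one_add_inverse_le:
  fixes x :: real
  assumes "0 < x" "x \<le> 4"
  shows "ln (1 + 1 / x) \<le> 4 - ln x"
proof -
  have "ln (1 + 1 / x) = ln (1 + x) - ln x" using assms(1) by (simp add: field_simps ln_div)
  then show ?thesis using assms ln_add_one_self_le_self[of x] by simp
qed

lemma sum_tuples_le_exp_ln_ln:
  fixes \<delta> \<rho> \<sigma> :: real
  assumes "0 < \<delta>" "2 \<le> k" "0 \<le> \<rho>" "\<rho> \<le> sqrt (2 - \<delta>)" "0 < \<sigma>" "\<sigma> \<le> 1 / ln (real k)"
    and "exp 1 < (real k)\<^sup>2 * \<rho>\<^sup>2" and T: "finite T" "T \<subseteq> tuples k"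
  shows "(\<Sum>n\<in>T. \<Prod>j<2*k. \<rho> ^ bigOmega (n j) * real (n j) powr (-(1/2 + \<sigma>)))
    \<le> exp (- ((real k)\<^sup>2 * \<rho>\<^sup>2) * (ln (2 * \<sigma>) + ln (ln ((real k)\<^sup>2 * \<rho>\<^sup>2))
        - (8 / (1 - sqrt ((2 - \<delta>) / 2)) + 26)))"
proof -
  define K where "K = (real k)\<^sup>2 * \<rho>\<^sup>2"
  define r where "r = sqrt ((2 - \<delta>) / 2)"
  define H where "H = (\<Sum>n=1..nat \<lfloor>4 * K\<rfloor>. real n powr (-(1 + 2 * \<sigma>)))"
  define N where "N = (\<Sum>n\<in>T. \<Sum>j<2*k. n j)"
  have "1 < exp (1::real)" by simp
  then have K: "1 < K" "K = (real k * \<rho>)\<^sup>2"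
    using assms(7) by (simp_all add: K_def power_mult_distrib del: one_less_exp_iff)
  have r: "\<rho> / sqrt 2 \<le> r" "r < 1"
    using assms(1,3,4) by (simp_all add: r_def real_sqrt_divide divide_right_mono)
  have "ln 2 \<le> ln (real k)" using assms(2) by simp
  then have "1 / ln (real k) \<le> 2" using ln_two_ge_half by (simp add: divide_le_eq)
  then have Z: "ln (1 + 1 / (2 * \<sigma>)) \<le> 4 - ln (2 * \<sigma>)"
    using assms(5,6) by (intro ln_one_add_inverse_le) auto
  have "\<rho> \<le> sqrt 2" using assms(1,4) real_sqrt_le_mono[of "2 - \<delta>" 2] by linarith
  then have "\<sigma> * ln (4 * K) \<le> 5"
    using K(1) assms by (intro sigma_mult_ln_le_five[of k K \<rho> \<sigma>]) (auto simp: K_def)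
  then have H: "0 < H" "ln (ln K) - 10 \<le> ln H"
    using ln_ln_le_ln_sum_powr[OF K(1) assms(5)] by (simp_all add: H_def)
  have "0 < 1 + 1 / (2 * \<sigma>)" using assms(5) by (intro add_pos_pos) auto
  then have "ln ((1 + 1 / (2 * \<sigma>)) / H) \<le> 14 - ln (2 * \<sigma>) - ln (ln K)"
    using Z H by (simp add: ln_div)
  then have "K * ln ((1 + 1 / (2 * \<sigma>)) / H) \<le> K * (14 - ln (2 * \<sigma>) - ln (ln K))"
    using K(1) by (intro mult_left_mono) auto
  then have exponent_le: "8 * K / (1 - r) + K * ln ((1 + 1 / (2 * \<sigma>)) / H) + 12 * K
      \<le> - K * (ln (2 * \<sigma>) + ln (ln K) - (8 / (1 - r) + 26))"
    by (simp add: algebra_simps)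
  have "n j \<le> N" if "n \<in> T" "j < 2 * k" for n j
    using that T(1) member_le_sum[of j "{..<2*k}" n] member_le_sum[of n T "\<lambda>n. \<Sum>j<2*k. n j"]
    by (simp add: N_def)
  then have "(\<Sum>n\<in>T. \<Prod>j<2*k. \<rho> ^ bigOmega (n j) * real (n j) powr (-(1/2 + \<sigma>)))
      \<le> (\<Prod>p | prime p \<and> p \<le> N. local_factor k N (\<rho> * real p powr (-(1/2 + \<sigma>))))"
    using T assms(3) by (intro sum_tuples_le_prod_local_factor) auto
  also have "\<dots> \<le> exp (8 * K / (1 - r) + K * ln ((1 + 1 / (2 * \<sigma>)) / H) + 12 * K)"
    unfolding H_def using assms(2,3,5) K r by (intro prod_local_factor_le_exp) auto
  also have "\<dots> \<le> exp (- K * (ln (2 * \<sigma>) + ln (ln K) - (8 / (1 - r) + 26)))"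
    using exponent_le by simp
  finally show ?thesis by (simp add: K_def r_def)
qed

lemma norm_prod_Dirichlet_terms:
  fixes \<rho> :: real and s :: "nat \<Rightarrow> complex"
  assumes "0 \<le> \<rho>"
  shows "norm (\<Prod>j<m. complex_of_real (\<rho> ^ bigOmega (n j)) / of_nat (n j) powr (1/2 + s j))
    = (\<Prod>j<m. \<rho> ^ bigOmega (n j) * real (n j) powr (-(1/2 + Re (s j))))"
proof -
  have "norm (complex_of_real (\<rho> ^ bigOmega (n j)) / of_nat (n j) powr (1/2 + s j))
      = \<rho> ^ bigOmega (n j) * real (n j) powr (-(1/2 + Re (s j)))" (is "?lhs j = ?rhs j") for j
  proof -
    have "norm ((of_nat (n j) :: complex) powr (1/2 + s j)) = real (n j) powr (1/2 + Re (s j))"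
      by (subst norm_powr_real_powr) auto
    moreover have "norm (complex_of_real (\<rho> ^ bigOmega (n j))) = \<rho> ^ bigOmega (n j)"
      using assms by (simp add: norm_power)
    ultimately show ?thesis by (simp only: norm_divide powr_minus_divide) simp
  qed
  then show ?thesis by (simp only: prod_norm[symmetric])
qed

theorem lemma1:
  fixes \<delta> :: real
  assumes "\<delta> > 0"
  shows "\<exists>C::real. \<forall>(k::nat) (\<rho>::real) (\<sigma>::real) (t::nat \<Rightarrow> real).
     2 \<le> k \<and> 0 \<le> \<rho> \<and> \<rho> \<le> sqrt (2 - \<delta>) \<and> 0 < \<sigma> \<and> \<sigma> \<le> 1 / ln (real k) \<and>
     exp 1 < (real k)\<^sup>2 * \<rho>\<^sup>2 \<longrightarrow>
     norm (F k \<rho> (\<lambda>l. complex_of_real \<sigma> + \<i> * complex_of_real (t l)))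
       \<le> exp (- ((real k)\<^sup>2 * \<rho>\<^sup>2) *
               (ln (2 * \<sigma>) + ln (ln ((real k)\<^sup>2 * \<rho>\<^sup>2)) - C))"
proof (rule exI[where x = "8 / (1 - sqrt ((2 - \<delta>) / 2)) + 26"], intro allI impI,
    unfold F_def, rule norm_infsum_le_finite_sums, goal_cases)
  case (1 k \<rho> \<sigma> t T)
  then have h: "2 \<le> k" "0 \<le> \<rho>" "\<rho> \<le> sqrt (2 - \<delta>)" "0 < \<sigma>" "\<sigma> \<le> 1 / ln (real k)"
    "exp 1 < (real k)\<^sup>2 * \<rho>\<^sup>2" "finite T" "T \<subseteq> tuples k" by auto
  show ?case
    using sum_tuples_le_exp_ln_ln[OF assms h] by (simp only: norm_prod_Dirichlet_terms[OF h(2)]) simp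
qed

end
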